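(* Let $\Gamma$ be a distance-regular graph with classical parameters $(D,b,\alpha,\beta)$ such that $b\ge2$, $b-1\ge\alpha\ge1$ and $D\ge3$, geometric with respect to a set $\mathcal C$ of Delsarte cliques. Let $r=[D]$. Assume that for every vertex $x$ the local graph at $x$ is the $\alpha$-clique extension of a $\frac{\beta}{\alpha}\times r$-grid, and assume $\beta>\alpha r$. Then: (a) for every assembly $M$ and every vertex $x$ at distance $i$ from $M$ ($i=0,1,\dots,D$), the number of vertices of $M$ at distance $i$ from $x$ equals $1+\alpha[i]$; (b) for every two vertices $x,y$ at distance $j$ ($j=1,\dots,D$), the number of assemblies containing $y$ at distance $j-1$ from $x$ equals $[j]$; (c) for every two vertices $x,y$ at distance $h$ ($h=0,1,\dots,D-1$), the subgraph induced on $B_h(x,y)=\Gamma_{h+1}(x)\cap\Gamma(y)$ is the $\alpha$-clique extension of a $(\frac{\beta}{\alpha}-[h])\times(r-[h])$-grid.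
   Context: Distance-regular graph with intersection numbers $b_i,c_i$, valency $k=b_0$; $\Gamma_i(x)$ is the set of vertices at distance $i$ from $x$, $\Gamma(y)=\Gamma_1(y)$. For integer $b\ne1$, $[j]=\frac{b^j-1}{b-1}$. Classical parameters $(D,b,\alpha,\beta)$: diameter $D$, $b_i=([D]-[i])(\beta-\alpha[i])$, $c_i=[i](1+\alpha[i-1])$. A Delsarte clique is a clique with $1+\frac{k}{-\theta_{\min}}$ vertices, $\theta_{\min}$ the smallest adjacency eigenvalue; geometric with respect to $\mathcal C$ means every edge lies in exactly one member of $\mathcal C$. An assembly is a maximal clique of $\Gamma$ not in $\mathcal C$. Distance from a vertex to a set $T$: $d(x,T)=\min_{y\in T}d(x,y)$. The $m\times n$-grid is $K_m\Box K_n$; the $s$-clique extension of $\Delta$ replaces each vertex by an $s$-clique, vertices in distinct cliques being adjacent iff the original vertices are adjacent. *)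

theory Defs
  imports Complex_Main
begin

definition simple_graph :: "'a set \<Rightarrow> ('a \<Rightarrow> 'a \<Rightarrow> bool) \<Rightarrow> bool" where
  "simple_graph V E \<longleftrightarrow> finite V \<and> (\<forall>x y. E x y \<longrightarrow> x \<in> V \<and> y \<in> V)
     \<and> (\<forall>x y. E x y \<longrightarrow> E y x) \<and> (\<forall>x. \<not> E x x)"

definition edge_rel :: "('a \<Rightarrow> 'a \<Rightarrow> bool) \<Rightarrow> ('a \<times> 'a) set" where
  "edge_rel E = {(u, v). E u v}"

definition connected_graph :: "'a set \<Rightarrow> ('a \<Rightarrow> 'a \<Rightarrow> bool) \<Rightarrow> bool" where
  "connected_graph V E \<longleftrightarrow> (\<forall>x\<in>V. \<forall>y\<in>V. (x, y) \<in> (edge_rel E)\<^sup>*)"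

definition gdist :: "('a \<Rightarrow> 'a \<Rightarrow> bool) \<Rightarrow> 'a \<Rightarrow> 'a \<Rightarrow> nat" where
  "gdist E x y = (LEAST n. (x, y) \<in> (edge_rel E) ^^ n)"

definition Gam :: "'a set \<Rightarrow> ('a \<Rightarrow> 'a \<Rightarrow> bool) \<Rightarrow> nat \<Rightarrow> 'a \<Rightarrow> 'a set" where
  "Gam V E i x = {y \<in> V. gdist E x y = i}"

definition diameter :: "'a set \<Rightarrow> ('a \<Rightarrow> 'a \<Rightarrow> bool) \<Rightarrow> nat" where
  "diameter V E = Max {gdist E x y | x y. x \<in> V \<and> y \<in> V}"

definition qnum :: "int \<Rightarrow> nat \<Rightarrow> real" where
  "qnum b j = (real_of_int b ^ j - 1) / (real_of_int b - 1)"

definition cl_b :: "nat \<Rightarrow> int \<Rightarrow> real \<Rightarrow> real \<Rightarrow> nat \<Rightarrow> real" where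
  "cl_b D b \<alpha> \<beta> i = (qnum b D - qnum b i) * (\<beta> - \<alpha> * qnum b i)"

definition cl_c :: "int \<Rightarrow> real \<Rightarrow> nat \<Rightarrow> real" where
  "cl_c b \<alpha> i = qnum b i * (1 + \<alpha> * qnum b (i - 1))"

definition drg_classical :: "'a set \<Rightarrow> ('a \<Rightarrow> 'a \<Rightarrow> bool) \<Rightarrow> nat \<Rightarrow> int \<Rightarrow> real \<Rightarrow> real \<Rightarrow> bool" where
  "drg_classical V E D b \<alpha> \<beta> \<longleftrightarrow> simple_graph V E \<and> V \<noteq> {} \<and> connected_graph V E
     \<and> b \<noteq> 1 \<and> diameter V E = D
     \<and> (\<forall>x\<in>V. \<forall>y\<in>V.
          (1 \<le> gdist E x y \<longrightarrow>
             real (card (Gam V E (gdist E x y - 1) x \<inter> Gam V E 1 y)) = cl_c b \<alpha> (gdist E x y))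
        \<and> (gdist E x y < D \<longrightarrow>
             real (card (Gam V E (gdist E x y + 1) x \<inter> Gam V E 1 y)) = cl_b D b \<alpha> \<beta> (gdist E x y)))"

definition adj_eigenvalues :: "'a set \<Rightarrow> ('a \<Rightarrow> 'a \<Rightarrow> bool) \<Rightarrow> real set" where
  "adj_eigenvalues V E = {\<theta>. \<exists>f :: 'a \<Rightarrow> real. (\<exists>x\<in>V. f x \<noteq> 0)
       \<and> (\<forall>x\<in>V. (\<Sum>y\<in>{y\<in>V. E x y}. f y) = \<theta> * f x)}"

definition theta_min :: "'a set \<Rightarrow> ('a \<Rightarrow> 'a \<Rightarrow> bool) \<Rightarrow> real" where
  "theta_min V E = Min (adj_eigenvalues V E)"

definition valency :: "'a set \<Rightarrow> ('a \<Rightarrow> 'a \<Rightarrow> bool) \<Rightarrow> nat" where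
  "valency V E = card {y \<in> V. E (SOME x. x \<in> V) y}"

definition is_clique :: "'a set \<Rightarrow> ('a \<Rightarrow> 'a \<Rightarrow> bool) \<Rightarrow> 'a set \<Rightarrow> bool" where
  "is_clique V E Q \<longleftrightarrow> Q \<subseteq> V \<and> (\<forall>x\<in>Q. \<forall>y\<in>Q. x \<noteq> y \<longrightarrow> E x y)"

definition max_clique :: "'a set \<Rightarrow> ('a \<Rightarrow> 'a \<Rightarrow> bool) \<Rightarrow> 'a set \<Rightarrow> bool" where
  "max_clique V E Q \<longleftrightarrow> is_clique V E Q \<and> (\<forall>Q'. is_clique V E Q' \<and> Q \<subseteq> Q' \<longrightarrow> Q' = Q)"

definition delsarte_clique :: "'a set \<Rightarrow> ('a \<Rightarrow> 'a \<Rightarrow> bool) \<Rightarrow> 'a set \<Rightarrow> bool" where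
  "delsarte_clique V E Q \<longleftrightarrow> is_clique V E Q \<and>
     real (card Q) = 1 + real (valency V E) / (- theta_min V E)"

definition geometric :: "'a set \<Rightarrow> ('a \<Rightarrow> 'a \<Rightarrow> bool) \<Rightarrow> 'a set set \<Rightarrow> bool" where
  "geometric V E \<C> \<longleftrightarrow> (\<forall>Q\<in>\<C>. delsarte_clique V E Q)
     \<and> (\<forall>x y. E x y \<longrightarrow> (\<exists>!Q. Q \<in> \<C> \<and> x \<in> Q \<and> y \<in> Q))"

definition assembly :: "'a set \<Rightarrow> ('a \<Rightarrow> 'a \<Rightarrow> bool) \<Rightarrow> 'a set set \<Rightarrow> 'a set \<Rightarrow> bool" where
  "assembly V E \<C> M \<longleftrightarrow> max_clique V E M \<and> M \<notin> \<C>"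

definition setdist :: "('a \<Rightarrow> 'a \<Rightarrow> bool) \<Rightarrow> 'a \<Rightarrow> 'a set \<Rightarrow> nat" where
  "setdist E x T = Min (gdist E x ` T)"

definition induced :: "('a \<Rightarrow> 'a \<Rightarrow> bool) \<Rightarrow> 'a set \<Rightarrow> 'a \<Rightarrow> 'a \<Rightarrow> bool" where
  "induced E S u v \<longleftrightarrow> u \<in> S \<and> v \<in> S \<and> E u v"

definition graph_iso :: "'a set \<Rightarrow> ('a \<Rightarrow> 'a \<Rightarrow> bool) \<Rightarrow> 'b set \<Rightarrow> ('b \<Rightarrow> 'b \<Rightarrow> bool) \<Rightarrow> bool" where
  "graph_iso V1 E1 V2 E2 \<longleftrightarrow> (\<exists>f. bij_betw f V1 V2 \<and> (\<forall>u\<in>V1. \<forall>v\<in>V1. E1 u v \<longleftrightarrow> E2 (f u) (f v)))"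

definition grid_V :: "nat \<Rightarrow> nat \<Rightarrow> (nat \<times> nat) set" where
  "grid_V m n = {..<m} \<times> {..<n}"

definition grid_E :: "nat \<Rightarrow> nat \<Rightarrow> nat \<times> nat \<Rightarrow> nat \<times> nat \<Rightarrow> bool" where
  "grid_E m n p q \<longleftrightarrow> p \<in> grid_V m n \<and> q \<in> grid_V m n \<and> p \<noteq> q
     \<and> (fst p = fst q \<or> snd p = snd q)"

definition cext_V :: "nat \<Rightarrow> 'b set \<Rightarrow> ('b \<times> nat) set" where
  "cext_V s W = W \<times> {..<s}"

definition cext_E :: "nat \<Rightarrow> 'b set \<Rightarrow> ('b \<Rightarrow> 'b \<Rightarrow> bool) \<Rightarrow> 'b \<times> nat \<Rightarrow> 'b \<times> nat \<Rightarrow> bool" where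
  "cext_E s W F p q \<longleftrightarrow> p \<in> cext_V s W \<and> q \<in> cext_V s W \<and> p \<noteq> q
     \<and> (fst p = fst q \<or> F (fst p) (fst q))"

definition is_cext_grid :: "'a set \<Rightarrow> ('a \<Rightarrow> 'a \<Rightarrow> bool) \<Rightarrow> nat \<Rightarrow> nat \<Rightarrow> nat \<Rightarrow> bool" where
  "is_cext_grid S E s m n \<longleftrightarrow>
     graph_iso S (induced E S) (cext_V s (grid_V m n)) (cext_E s (grid_V m n) (grid_E m n))"

end

theory Submission
  imports Defs "Jordan_Normal_Form.Char_Poly"
begin

(* The local graph at a vertex y is the alpha-clique extension of an m x r grid, m = beta/alpha,
   r = [D]; so the maximal cliques through y consist of y and one row or one column of that grid.
   The cliques formed by the columns have 1 + alpha m vertices and cover every vertex r times and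
   every edge once, which forces theta_min >= -r.  Hence a Delsarte clique has at least 1 + alpha m
   vertices: the Delsarte cliques are the columns and the assemblies are the rows, of size
   1 + alpha r.  For x at distance h from y, induction on h using c_h and b_h shows that the
   neighbours of y nearer to x fill exactly [h] rows and [h] columns of the grid at y, and that the
   neighbours farther from x are those outside these rows and columns.  Counting on a row gives
   (a), the rows met by nearer neighbours give (b), and the remaining rows and columns give the
   grid of (c). *)

lemma gdist_le: "(x, y) \<in> edge_rel E ^^ n \<Longrightarrow> gdist E x y \<le> n"
  unfolding gdist_def by (rule Least_le)

lemma gdist_self [simp]: "gdist E x x = 0"
  using gdist_le[of x x 0] by simp

lemma setdist_attained:
  assumes "finite T" and "T \<noteq> {}"
  shows "\<exists>z\<in>T. gdist E x z = setdist E x T"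
proof -
  have "Min (gdist E x ` T) \<in> gdist E x ` T" using assms by (intro Min_in) auto
  then show ?thesis unfolding setdist_def by auto
qed

lemma setdist_le: "finite T \<Longrightarrow> z \<in> T \<Longrightarrow> setdist E x T \<le> gdist E x z"
  unfolding setdist_def by simp

lemma setdist_eqI:
  assumes "finite T" and "z \<in> T" and "gdist E x z = h" and "\<forall>u\<in>T. h \<le> gdist E x u"
  shows "setdist E x T = h"
  unfolding setdist_def using assms by (intro Min_eqI) auto

lemma cext_grid_adj_iff:
  assumes "p \<in> cext_V s (grid_V a b)" and "p' \<in> cext_V s (grid_V a b)"
  shows "cext_E s (grid_V a b) (grid_E a b) p p' \<longleftrightarrow>
    p \<noteq> p' \<and> (fst (fst p) = fst (fst p') \<or> snd (fst p) = snd (fst p'))"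
proof -
  obtain a1 b1 s1 where p: "p = ((a1, b1), s1)" by (metis prod.collapse)
  obtain a2 b2 s2 where p': "p' = ((a2, b2), s2)" by (metis prod.collapse)
  show ?thesis using assms unfolding p p' cext_E_def cext_V_def grid_E_def grid_V_def by auto
qed

lemma all_bool_iff: "(\<forall>b. P b) \<longleftrightarrow> P t \<and> P (\<not> t)"
  by (cases t) (auto simp: all_bool_eq)

lemma pairwise_share_coord:
  assumes share: "\<forall>a\<in>S. \<forall>b\<in>S. a \<noteq> b \<longrightarrow> f a = f b \<or> g a = g b"
  shows "(\<forall>a\<in>S. \<forall>b\<in>S. f a = f b) \<or> (\<forall>a\<in>S. \<forall>b\<in>S. g a = g b)"
proof (cases "\<forall>a\<in>S. \<forall>b\<in>S. f a = f b")
  case False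
  then obtain a b where a: "a \<in> S" and b: "b \<in> S" and fab: "f a \<noteq> f b" by blast
  then have "a \<noteq> b" by blast
  then have gab: "g a = g b" using share a b fab by blast
  have gc: "g c = g a" if c: "c \<in> S" for c
  proof (rule ccontr)
    assume ne: "g c \<noteq> g a"
    then have "c \<noteq> a" "c \<noteq> b" using gab by auto
    then have "f c = f a \<or> g c = g a" "f c = f b \<or> g c = g b" using share a b c by blast+
    then show False using ne gab fab by simp
  qed
  have "\<forall>c\<in>S. \<forall>d\<in>S. g c = g d"
  proof (intro ballI)
    fix c d assume "c \<in> S" "d \<in> S"
    then show "g c = g d" using gc[of c] gc[of d] by simp
  qed
  then show ?thesis by (rule disjI2)
next
  case True
  then show ?thesis by (rule disjI1)
qed

lemma sum_squares_over_family:
  fixes f :: "'a \<Rightarrow> real"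
  assumes V: "finite V" and F: "finite F" "\<forall>L\<in>F. L \<subseteq> V"
  shows "(\<Sum>L\<in>F. (\<Sum>u\<in>L. f u)\<^sup>2)
       = (\<Sum>u\<in>V. \<Sum>v\<in>V. f u * f v * real (card {L \<in> F. u \<in> L \<and> v \<in> L}))"
proof -
  have square: "(\<Sum>u\<in>L. f u)\<^sup>2 = (\<Sum>u\<in>V. \<Sum>v\<in>V. if u \<in> L \<and> v \<in> L then f u * f v else 0)"
    if L: "L \<subseteq> V" for L
  proof -
    have restrict: "(\<Sum>u\<in>L. g u) = (\<Sum>u\<in>V. if u \<in> L then g u else 0)" for g :: "'a \<Rightarrow> real"
      using sum.inter_restrict[OF V, of g L] L by (simp add: Int_absorb1)
    have "(\<Sum>u\<in>L. f u)\<^sup>2 = (\<Sum>u\<in>L. \<Sum>v\<in>L. f u * f v)"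
      by (simp add: power2_eq_square sum_product)
    also have "\<dots> = (\<Sum>u\<in>V. if u \<in> L then (\<Sum>v\<in>L. f u * f v) else 0)"
      by (rule restrict)
    also have "\<dots> = (\<Sum>u\<in>V. \<Sum>v\<in>V. if u \<in> L \<and> v \<in> L then f u * f v else 0)"
    proof (rule sum.cong[OF refl])
      fix u
      show "(if u \<in> L then \<Sum>v\<in>L. f u * f v else 0)
          = (\<Sum>v\<in>V. if u \<in> L \<and> v \<in> L then f u * f v else 0)"
        using restrict[of "\<lambda>v. f u * f v"] by simp
    qed
    finally show ?thesis .
  qed
  have count: "(\<Sum>L\<in>F. if u \<in> L \<and> v \<in> L then c else 0) = c * real (card {L \<in> F. u \<in> L \<and> v \<in> L})"
    for u v and c :: real
    using sum.inter_filter[OF F(1), of "\<lambda>_. c" "\<lambda>L. u \<in> L \<and> v \<in> L"] by (simp add: mult.commute)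
  have "(\<Sum>L\<in>F. (\<Sum>u\<in>L. f u)\<^sup>2)
      = (\<Sum>L\<in>F. \<Sum>u\<in>V. \<Sum>v\<in>V. if u \<in> L \<and> v \<in> L then f u * f v else 0)"
    using F(2) square by (intro sum.cong) auto
  also have "\<dots> = (\<Sum>u\<in>V. \<Sum>v\<in>V. \<Sum>L\<in>F. if u \<in> L \<and> v \<in> L then f u * f v else 0)"
    by (simp add: sum.swap[of _ F V])
  finally show ?thesis by (simp only: count)
qed

section \<open>Distance and spectrum of finite graphs\<close>

locale fin_graph =
  fixes V :: "'a set" and E :: "'a \<Rightarrow> 'a \<Rightarrow> bool"
  assumes simple: "simple_graph V E"
begin

lemma adj_in_V: "E x y \<Longrightarrow> x \<in> V \<and> y \<in> V"
  using simple unfolding simple_graph_def by blast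

lemma adj_sym: "E x y \<Longrightarrow> E y x"
  using simple unfolding simple_graph_def by blast

lemma adj_irrefl: "\<not> E x x"
  using simple unfolding simple_graph_def by blast

lemma finite_V: "finite V"
  using simple unfolding simple_graph_def by blast

lemma gdist_le_diameter:
  assumes "x \<in> V" and "y \<in> V"
  shows "gdist E x y \<le> diameter V E"
proof -
  have "finite {gdist E x y | x y. x \<in> V \<and> y \<in> V}"
    by (rule finite_image_set2) (use finite_V in simp_all)
  then show ?thesis unfolding diameter_def using assms by (intro Max_ge) auto
qed

definition adj_mat :: "(nat \<Rightarrow> 'a) \<Rightarrow> real mat" where
  "adj_mat e = mat (card V) (card V) (\<lambda>(i, j). if E (e i) (e j) then 1 else 0)"

lemma adj_mat_mult_vec:
  assumes e: "bij_betw e {0..<card V} V" and i: "i < card V"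
  shows "(adj_mat e *\<^sub>v vec (card V) (\<lambda>j. f (e j))) $ i = (\<Sum>y\<in>{y \<in> V. E (e i) y}. f y)"
proof -
  have "(adj_mat e *\<^sub>v vec (card V) (\<lambda>j. f (e j))) $ i
      = (\<Sum>j\<in>{0..<card V}. (if E (e i) (e j) then 1 else 0) * f (e j))"
    using i unfolding adj_mat_def by (simp add: scalar_prod_def)
  also have "\<dots> = (\<Sum>j\<in>{0..<card V}. if E (e i) (e j) then f (e j) else 0)"
    by (rule sum.cong) auto
  also have "\<dots> = (\<Sum>y\<in>V. if E (e i) y then f y else 0)"
    using sum.reindex_bij_betw[OF e, of "\<lambda>y. if E (e i) y then f y else 0"] by simp
  also have "\<dots> = (\<Sum>y\<in>{y \<in> V. E (e i) y}. f y)"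
    using sum.inter_filter[OF finite_V, of f "\<lambda>y. E (e i) y"] by simp
  finally show ?thesis .
qed

lemma adj_mat_eigenvalue:
  assumes e: "bij_betw e {0..<card V} V" and \<theta>: "\<theta> \<in> adj_eigenvalues V E"
  shows "eigenvalue (adj_mat e) \<theta>"
proof -
  obtain f :: "'a \<Rightarrow> real" where f_nz: "\<exists>x\<in>V. f x \<noteq> 0"
    and f_eig: "\<forall>x\<in>V. (\<Sum>y\<in>{y \<in> V. E x y}. f y) = \<theta> * f x"
    using \<theta> unfolding adj_eigenvalues_def by blast
  define v where "v = vec (card V) (\<lambda>j. f (e j))"
  have "eigenvector (adj_mat e) v \<theta>"
    unfolding eigenvector_def
  proof (intro conjI)
    show "v \<in> carrier_vec (dim_row (adj_mat e))" unfolding v_def adj_mat_def by simp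
  next
    obtain x where x: "x \<in> V" "f x \<noteq> 0" using f_nz by blast
    moreover have "x \<in> e ` {0..<card V}" using e x unfolding bij_betw_def by simp
    ultimately obtain i where i: "i < card V" "e i = x" by auto
    have "v $ i \<noteq> 0" using i x unfolding v_def by simp
    moreover have "0\<^sub>v (dim_row (adj_mat e)) $ i = 0" using i unfolding adj_mat_def by simp
    ultimately show "v \<noteq> 0\<^sub>v (dim_row (adj_mat e))" by metis
  next
    show "adj_mat e *\<^sub>v v = \<theta> \<cdot>\<^sub>v v"
    proof (rule eq_vecI)
      fix i assume "i < dim_vec (\<theta> \<cdot>\<^sub>v v)"
      then have i: "i < card V" unfolding v_def by simp
      have "e i \<in> V" using e i unfolding bij_betw_def by auto
      then show "(adj_mat e *\<^sub>v v) $ i = (\<theta> \<cdot>\<^sub>v v) $ i"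
        using adj_mat_mult_vec[OF e i] f_eig i unfolding v_def by simp
    next
      show "dim_vec (adj_mat e *\<^sub>v v) = dim_vec (\<theta> \<cdot>\<^sub>v v)" unfolding adj_mat_def v_def by simp
    qed
  qed
  then show ?thesis unfolding eigenvalue_def by blast
qed

lemma finite_adj_eigenvalues: "finite (adj_eigenvalues V E)"
proof -
  obtain e where e: "bij_betw e {0..<card V} V"
    using ex_bij_betw_nat_finite[OF finite_V] by blast
  have A: "adj_mat e \<in> carrier_mat (card V) (card V)" unfolding adj_mat_def by simp
  have "adj_eigenvalues V E \<subseteq> {\<theta>. poly (char_poly (adj_mat e)) \<theta> = 0}"
  proof
    fix \<theta> assume "\<theta> \<in> adj_eigenvalues V E"
    then show "\<theta> \<in> {\<theta>. poly (char_poly (adj_mat e)) \<theta> = 0}"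
      using adj_mat_eigenvalue[OF e] eigenvalue_root_char_poly[OF A] by simp
  qed
  moreover have "char_poly (adj_mat e) \<noteq> 0" using degree_monic_char_poly[OF A] by auto
  then have "finite {\<theta>. poly (char_poly (adj_mat e)) \<theta> = 0}" by (rule poly_roots_finite)
  ultimately show ?thesis by (rule finite_subset)
qed

lemma regular_adj_eigenvalue:
  assumes "V \<noteq> {}" and "\<forall>x\<in>V. card {y \<in> V. E x y} = k"
  shows "real k \<in> adj_eigenvalues V E"
  unfolding adj_eigenvalues_def using assms by (intro CollectI exI[of _ "\<lambda>_. 1"]) auto

lemma theta_min_adj_eigenvalue:
  assumes "V \<noteq> {}" and "\<forall>x\<in>V. card {y \<in> V. E x y} = k"
  shows "theta_min V E \<in> adj_eigenvalues V E"
  unfolding theta_min_def using finite_adj_eigenvalues regular_adj_eigenvalue[OF assms]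
  by (intro Min_in) auto

lemma valency_regular:
  assumes "V \<noteq> {}" and "\<forall>x\<in>V. card {y \<in> V. E x y} = k"
  shows "valency V E = k"
proof -
  have "(SOME x. x \<in> V) \<in> V" using assms(1) by (simp add: some_in_eq)
  then show ?thesis unfolding valency_def using assms(2) by simp
qed

lemma card_clique_cover_pair:
  assumes cliques: "\<forall>L\<in>F. is_clique V E L"
    and cover: "\<forall>u\<in>V. card {L \<in> F. u \<in> L} = r"
    and edges: "\<forall>u v. E u v \<longrightarrow> card {L \<in> F. u \<in> L \<and> v \<in> L} = 1"
    and u: "u \<in> V"
  shows "card {L \<in> F. u \<in> L \<and> v \<in> L} = (if u = v then r else if E u v then 1 else 0)"
proof -
  consider "u = v" | "E u v" | "u \<noteq> v" "\<not> E u v" by blast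
  then show ?thesis
  proof cases
    case 1
    then show ?thesis using cover u by simp
  next
    case 2
    then show ?thesis using edges adj_irrefl by auto
  next
    case 3
    then have none: "{L \<in> F. u \<in> L \<and> v \<in> L} = {}" using cliques unfolding is_clique_def by blast
    show ?thesis using 3 by (simp only: none card.empty if_False)
  qed
qed

lemma sum_squares_clique_cover:
  fixes f :: "'a \<Rightarrow> real"
  assumes F: "finite F" and cliques: "\<forall>L\<in>F. is_clique V E L"
    and cover: "\<forall>u\<in>V. card {L \<in> F. u \<in> L} = r"
    and edges: "\<forall>u v. E u v \<longrightarrow> card {L \<in> F. u \<in> L \<and> v \<in> L} = 1"
  shows "(\<Sum>L\<in>F. (\<Sum>u\<in>L. f u)\<^sup>2) = (\<Sum>u\<in>V. f u * (real r * f u + (\<Sum>v\<in>{v \<in> V. E u v}. f v)))"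
proof -
  have row: "(\<Sum>v\<in>V. f u * f v * real (card {L \<in> F. u \<in> L \<and> v \<in> L}))
      = f u * (real r * f u + (\<Sum>v\<in>{v \<in> V. E u v}. f v))"
    if u: "u \<in> V" for u
  proof -
    have "(\<Sum>v\<in>V. f u * f v * real (card {L \<in> F. u \<in> L \<and> v \<in> L}))
        = (\<Sum>v\<in>V. (if v = u then real r * (f u)\<^sup>2 else 0) + (if E u v then f u * f v else 0))"
      using card_clique_cover_pair[OF cliques cover edges u] adj_irrefl
      by (intro sum.cong) (auto simp: power2_eq_square)
    also have "\<dots> = real r * (f u)\<^sup>2 + (\<Sum>v\<in>V. if E u v then f u * f v else 0)"
      using u finite_V by (simp add: sum.distrib)
    also have "(\<Sum>v\<in>V. if E u v then f u * f v else 0) = (\<Sum>v\<in>{v \<in> V. E u v}. f u * f v)"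
      by (rule sum.inter_filter[OF finite_V, symmetric])
    finally show ?thesis by (simp add: power2_eq_square algebra_simps sum_distrib_left)
  qed
  have "\<forall>L\<in>F. L \<subseteq> V" using cliques unfolding is_clique_def by blast
  then have "(\<Sum>L\<in>F. (\<Sum>u\<in>L. f u)\<^sup>2)
      = (\<Sum>u\<in>V. \<Sum>v\<in>V. f u * f v * real (card {L \<in> F. u \<in> L \<and> v \<in> L}))"
    by (rule sum_squares_over_family[OF finite_V F])
  also have "\<dots> = (\<Sum>u\<in>V. f u * (real r * f u + (\<Sum>v\<in>{v \<in> V. E u v}. f v)))"
    by (rule sum.cong[OF refl row])
  finally show ?thesis .
qed

text \<open>For an eigenvector \<open>f\<close> with eigenvalue \<open>\<theta>\<close> the identity above reads
  \<open>0 \<le> \<Sum>L\<in>F. (\<Sum>u\<in>L. f u)\<^sup>2 = (r + \<theta>) \<Sum>u\<in>V. (f u)\<^sup>2\<close>.\<close>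

lemma adj_eigenvalue_ge_clique_cover:
  assumes F: "finite F" and cliques: "\<forall>L\<in>F. is_clique V E L"
    and cover: "\<forall>u\<in>V. card {L \<in> F. u \<in> L} = r"
    and edges: "\<forall>u v. E u v \<longrightarrow> card {L \<in> F. u \<in> L \<and> v \<in> L} = 1"
    and \<theta>: "\<theta> \<in> adj_eigenvalues V E"
  shows "- real r \<le> \<theta>"
proof -
  obtain f :: "'a \<Rightarrow> real" where f_nz: "\<exists>x\<in>V. f x \<noteq> 0"
    and f_eig: "\<forall>x\<in>V. (\<Sum>y\<in>{y \<in> V. E x y}. f y) = \<theta> * f x"
    using \<theta> unfolding adj_eigenvalues_def by blast
  have "0 \<le> (\<Sum>L\<in>F. (\<Sum>u\<in>L. f u)\<^sup>2)" by (simp add: sum_nonneg)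
  also have "\<dots> = (\<Sum>u\<in>V. f u * (real r * f u + (\<Sum>v\<in>{v \<in> V. E u v}. f v)))"
    by (rule sum_squares_clique_cover[OF F cliques cover edges])
  also have "\<dots> = (\<Sum>u\<in>V. (real r + \<theta>) * (f u)\<^sup>2)"
    using f_eig by (intro sum.cong refl) (simp add: power2_eq_square algebra_simps)
  also have "\<dots> = (real r + \<theta>) * (\<Sum>u\<in>V. (f u)\<^sup>2)"
    by (simp add: sum_distrib_left)
  finally have nonneg: "0 \<le> (real r + \<theta>) * (\<Sum>u\<in>V. (f u)\<^sup>2)" .
  obtain x where x: "x \<in> V" "f x \<noteq> 0" using f_nz by blast
  have "(f x)\<^sup>2 \<le> (\<Sum>u\<in>V. (f u)\<^sup>2)"
    using member_le_sum[of x V "\<lambda>u. (f u)\<^sup>2"] x finite_V by simp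
  moreover have "0 < (f x)\<^sup>2" using x by simp
  ultimately have "0 < (\<Sum>u\<in>V. (f u)\<^sup>2)" by linarith
  then have "0 \<le> real r + \<theta>" using nonneg by (simp add: zero_le_mult_iff)
  then show ?thesis by simp
qed

lemma delsarte_clique_card_ge:
  assumes V: "V \<noteq> {}" and regular: "\<forall>x\<in>V. card {y \<in> V. E x y} = k"
    and eig: "\<forall>\<theta>\<in>adj_eigenvalues V E. - real r \<le> \<theta>"
    and Q: "delsarte_clique V E Q" and two: "2 \<le> card Q"
  shows "1 + real k / real r \<le> real (card Q)"
proof -
  define \<theta> where "\<theta> = theta_min V E"
  have \<theta>_ge: "- real r \<le> \<theta>"
    using eig theta_min_adj_eigenvalue[OF V regular] unfolding \<theta>_def by blast
  have card_Q: "real (card Q) = 1 + real k / (- \<theta>)"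
    using Q valency_regular[OF V regular] unfolding delsarte_clique_def \<theta>_def by simp
  \<comment> \<open>for \<open>\<theta> \<ge> 0\<close> the quotient would be \<open>\<le> 0\<close> (also when \<open>\<theta> = 0\<close>, as \<open>x / 0 = 0\<close>)\<close>
  have "0 < - \<theta>"
  proof (rule ccontr)
    assume "\<not> 0 < - \<theta>"
    then have "real k / (- \<theta>) \<le> 0" by (simp add: divide_nonneg_nonpos)
    moreover have "2 \<le> real (card Q)" using two by simp
    ultimately show False using card_Q by simp
  qed
  then have "real k / real r \<le> real k / (- \<theta>)"
    using \<theta>_ge by (intro frac_le) auto
  then show ?thesis using card_Q by simp
qed

end

locale conn_graph = fin_graph +
  assumes connected: "connected_graph V E"
begin

lemma gdist_path:
  assumes "x \<in> V" and "y \<in> V"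
  shows "(x, y) \<in> edge_rel E ^^ gdist E x y"
proof -
  have "(x, y) \<in> (edge_rel E)\<^sup>*" using connected assms unfolding connected_graph_def by blast
  then obtain n where "(x, y) \<in> edge_rel E ^^ n" using rtrancl_power by blast
  then show ?thesis unfolding gdist_def by (rule LeastI)
qed

lemma gdist_eq_0_imp_eq: "x \<in> V \<Longrightarrow> y \<in> V \<Longrightarrow> gdist E x y = 0 \<Longrightarrow> x = y"
  using gdist_path[of x y] by simp

lemma gdist_adj: "E x y \<Longrightarrow> gdist E x y = 1"
proof -
  assume e: "E x y"
  have "(x, y) \<in> edge_rel E ^^ 1" using e by (simp add: edge_rel_def)
  then have "gdist E x y \<le> 1" by (rule gdist_le)
  moreover have "gdist E x y \<noteq> 0" using gdist_eq_0_imp_eq[of x y] adj_in_V[OF e] e adj_irrefl by auto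
  ultimately show ?thesis by simp
qed

lemma gdist_eq_1_imp_adj: "x \<in> V \<Longrightarrow> y \<in> V \<Longrightarrow> gdist E x y = 1 \<Longrightarrow> E x y"
  using gdist_path[of x y] by (simp add: edge_rel_def)

lemma gdist_adj_le:
  assumes x: "x \<in> V" and e: "E y z"
  shows "gdist E x z \<le> gdist E x y + 1"
proof -
  have "(x, y) \<in> edge_rel E ^^ gdist E x y" using gdist_path x adj_in_V[OF e] by blast
  then have "(x, z) \<in> edge_rel E ^^ Suc (gdist E x y)"
    using e by (auto intro: relpow_Suc_I simp: edge_rel_def)
  then show ?thesis using gdist_le by fastforce
qed

lemma Gam_1_iff: "y \<in> V \<Longrightarrow> u \<in> Gam V E 1 y \<longleftrightarrow> E y u"
  unfolding Gam_def using gdist_eq_1_imp_adj gdist_adj adj_in_V by blast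

end

section \<open>Graphs whose local graphs are clique extensions of grids\<close>

locale local_grid = conn_graph +
  fixes al m r :: nat
  assumes local_grid: "\<forall>x\<in>V. is_cext_grid (Gam V E 1 x) E al m r"
    and al_pos: "1 \<le> al" and r_ge_2: "2 \<le> r" and r_less_m: "r < m"
begin

abbreviation nbrs :: "'a \<Rightarrow> 'a set" where
  "nbrs y \<equiv> Gam V E 1 y"

definition grid_iso :: "'a \<Rightarrow> 'a \<Rightarrow> (nat \<times> nat) \<times> nat" where
  "grid_iso y = (SOME f. bij_betw f (nbrs y) (cext_V al (grid_V m r)) \<and>
     (\<forall>u\<in>nbrs y. \<forall>v\<in>nbrs y. induced E (nbrs y) u v \<longleftrightarrow> cext_E al (grid_V m r) (grid_E m r) (f u) (f v)))"

text \<open>\<open>coord y False\<close> and \<open>coord y True\<close> are the row in \<open>{..<m}\<close> and the column in \<open>{..<r}\<close>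
  of a neighbour of \<open>y\<close> in the grid at \<open>y\<close>. A line of fixed column has \<open>1 + al * m\<close> vertices
  and turns out to be a Delsarte clique; a line of fixed row has \<open>1 + al * r\<close> vertices and is
  an assembly.\<close>

definition side :: "bool \<Rightarrow> nat" where
  "side t = (if t then r else m)"

definition coord :: "'a \<Rightarrow> bool \<Rightarrow> 'a \<Rightarrow> nat" where
  "coord y t u = (if t then snd (fst (grid_iso y u)) else fst (fst (grid_iso y u)))"

definition line :: "'a \<Rightarrow> bool \<Rightarrow> nat \<Rightarrow> 'a set" where
  "line y t c = insert y {u \<in> nbrs y. coord y t u = c}"

lemma grid_iso:
  assumes "y \<in> V"
  shows "bij_betw (grid_iso y) (nbrs y) (cext_V al (grid_V m r)) \<and>
    (\<forall>u\<in>nbrs y. \<forall>v\<in>nbrs y. induced E (nbrs y) u v \<longleftrightarrow>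
       cext_E al (grid_V m r) (grid_E m r) (grid_iso y u) (grid_iso y v))"
proof -
  have "is_cext_grid (nbrs y) E al m r" using local_grid assms by blast
  then have "\<exists>f. bij_betw f (nbrs y) (cext_V al (grid_V m r)) \<and>
      (\<forall>u\<in>nbrs y. \<forall>v\<in>nbrs y. induced E (nbrs y) u v \<longleftrightarrow>
         cext_E al (grid_V m r) (grid_E m r) (f u) (f v))"
    unfolding is_cext_grid_def graph_iso_def by blast
  then show ?thesis unfolding grid_iso_def by (rule someI_ex)
qed

lemma grid_iso_bij: "y \<in> V \<Longrightarrow> bij_betw (grid_iso y) (nbrs y) (cext_V al (grid_V m r))"
  by (rule conjunct1[OF grid_iso])

lemma grid_iso_induced:
  assumes y: "y \<in> V" and u: "u \<in> nbrs y" and v: "v \<in> nbrs y"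
  shows "induced E (nbrs y) u v \<longleftrightarrow>
    cext_E al (grid_V m r) (grid_E m r) (grid_iso y u) (grid_iso y v)"
proof -
  have "\<forall>u\<in>nbrs y. \<forall>v\<in>nbrs y. induced E (nbrs y) u v \<longleftrightarrow>
      cext_E al (grid_V m r) (grid_E m r) (grid_iso y u) (grid_iso y v)"
    by (rule conjunct2[OF grid_iso[OF y]])
  then show ?thesis using u v by blast
qed

lemma grid_iso_inj: "y \<in> V \<Longrightarrow> inj_on (grid_iso y) (nbrs y)"
  using grid_iso_bij by (rule bij_betw_imp_inj_on)

lemma grid_iso_image: "y \<in> V \<Longrightarrow> grid_iso y ` nbrs y = ({..<m} \<times> {..<r}) \<times> {..<al}"
  using bij_betw_imp_surj_on[OF grid_iso_bij] unfolding cext_V_def grid_V_def by blast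

lemma coord_less:
  assumes y: "y \<in> V" and u: "u \<in> nbrs y"
  shows "coord y t u < side t"
proof -
  have "grid_iso y u \<in> ({..<m} \<times> {..<r}) \<times> {..<al}" using grid_iso_image[OF y] u by blast
  then show ?thesis unfolding coord_def side_def by (auto simp: mem_Times_iff)
qed

lemma side_ge_2: "2 \<le> side t"
  using r_ge_2 r_less_m unfolding side_def by auto

lemma nbrs_subset_V: "nbrs y \<subseteq> V"
  unfolding Gam_def by blast

lemma finite_nbrs: "finite (nbrs y)"
  using finite_V nbrs_subset_V finite_subset by blast

lemma not_in_nbrs: "y \<notin> nbrs y"
  unfolding Gam_def by simp

lemma adj_nbrs_iff:
  assumes y: "y \<in> V" and u: "u \<in> nbrs y" and v: "v \<in> nbrs y"
  shows "E u v \<longleftrightarrow> u \<noteq> v \<and> (coord y False u = coord y False v \<or> coord y True u = coord y True v)"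
proof -
  have in_grid: "grid_iso y w \<in> cext_V al (grid_V m r)" if "w \<in> nbrs y" for w
    using bij_betw_apply[OF grid_iso_bij[OF y] that] .
  have "E u v \<longleftrightarrow> induced E (nbrs y) u v" using u v unfolding induced_def by blast
  also have "\<dots> \<longleftrightarrow> cext_E al (grid_V m r) (grid_E m r) (grid_iso y u) (grid_iso y v)"
    by (rule grid_iso_induced[OF y u v])
  also have "\<dots> \<longleftrightarrow> grid_iso y u \<noteq> grid_iso y v \<and>
      (coord y False u = coord y False v \<or> coord y True u = coord y True v)"
    using cext_grid_adj_iff[OF in_grid[OF u] in_grid[OF v]] unfolding coord_def by simp
  also have "grid_iso y u \<noteq> grid_iso y v \<longleftrightarrow> u \<noteq> v"
    using inj_on_eq_iff[OF grid_iso_inj[OF y] u v] by simp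
  finally show ?thesis .
qed

lemma bij_betw_grid_iso_coords:
  assumes y: "y \<in> V" and X: "X \<subseteq> {..<m}" and Y: "Y \<subseteq> {..<r}"
  shows "bij_betw (grid_iso y) {u \<in> nbrs y. coord y False u \<in> X \<and> coord y True u \<in> Y}
    ((X \<times> Y) \<times> {..<al})"
proof -
  let ?S = "{u \<in> nbrs y. coord y False u \<in> X \<and> coord y True u \<in> Y}"
  have "grid_iso y ` ?S = (X \<times> Y) \<times> {..<al}"
  proof
    show "grid_iso y ` ?S \<subseteq> (X \<times> Y) \<times> {..<al}"
    proof
      fix p assume "p \<in> grid_iso y ` ?S"
      then obtain u where u: "u \<in> ?S" "p = grid_iso y u" by blast
      have "grid_iso y u \<in> ({..<m} \<times> {..<r}) \<times> {..<al}" using grid_iso_image[OF y] u by blast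
      then show "p \<in> (X \<times> Y) \<times> {..<al}" using u unfolding coord_def by (auto simp: mem_Times_iff)
    qed
  next
    show "(X \<times> Y) \<times> {..<al} \<subseteq> grid_iso y ` ?S"
    proof
      fix p assume p: "p \<in> (X \<times> Y) \<times> {..<al}"
      then have "p \<in> grid_iso y ` nbrs y" using grid_iso_image[OF y] X Y by (auto simp: mem_Times_iff)
      then obtain u where u: "u \<in> nbrs y" "p = grid_iso y u" by blast
      then have "u \<in> ?S" using p unfolding coord_def by (auto simp: mem_Times_iff)
      then show "p \<in> grid_iso y ` ?S" using u by blast
    qed
  qed
  moreover have "inj_on (grid_iso y) ?S" by (rule inj_on_subset[OF grid_iso_inj[OF y]]) blast
  ultimately show ?thesis unfolding bij_betw_def by blast
qed

lemma card_rows_cols: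
  assumes y: "y \<in> V" and X: "X \<subseteq> {..<m}" and Y: "Y \<subseteq> {..<r}"
  shows "card {u \<in> nbrs y. coord y False u \<in> X \<and> coord y True u \<in> Y} = al * card X * card Y"
  using bij_betw_same_card[OF bij_betw_grid_iso_coords[OF assms]] by (simp add: card_cartesian_product)

lemma card_coords:
  assumes y: "y \<in> V" and X: "X \<subseteq> {..<side t}" and Y: "Y \<subseteq> {..<side (\<not> t)}"
  shows "card {u \<in> nbrs y. coord y t u \<in> X \<and> coord y (\<not> t) u \<in> Y} = al * card X * card Y"
proof (cases t)
  case True
  then have "{u \<in> nbrs y. coord y t u \<in> X \<and> coord y (\<not> t) u \<in> Y}
      = {u \<in> nbrs y. coord y False u \<in> Y \<and> coord y True u \<in> X}"
    by auto
  then show ?thesis using card_rows_cols[OF y, of Y X] X Y True unfolding side_def by simp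
next
  case False
  then show ?thesis using card_rows_cols[OF y, of X Y] X Y unfolding side_def by simp
qed

lemma exists_nbr_coords:
  assumes y: "y \<in> V" and "c < side t" and "d < side (\<not> t)"
  shows "\<exists>u\<in>nbrs y. coord y t u = c \<and> coord y (\<not> t) u = d"
proof -
  have "card {u \<in> nbrs y. coord y t u \<in> {c} \<and> coord y (\<not> t) u \<in> {d}} = al"
    using card_coords[OF y, of "{c}" t "{d}"] assms by simp
  then have "{u \<in> nbrs y. coord y t u \<in> {c} \<and> coord y (\<not> t) u \<in> {d}} \<noteq> {}"
    using al_pos by (metis card.empty not_one_le_zero)
  then show ?thesis by blast
qed

lemma exists_nbr_coord: "y \<in> V \<Longrightarrow> c < side t \<Longrightarrow> \<exists>u\<in>nbrs y. coord y t u = c"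
  using exists_nbr_coords[of y c t 0] side_ge_2[of "\<not> t"] by auto

lemma card_nbrs:
  assumes y: "y \<in> V"
  shows "card (nbrs y) = al * m * r"
proof -
  have all: "{u \<in> nbrs y. coord y False u \<in> {..<m} \<and> coord y True u \<in> {..<r}} = nbrs y"
    using coord_less[OF y, of _ False] coord_less[OF y, of _ True] unfolding side_def by auto
  show ?thesis using card_rows_cols[OF y, of "{..<m}" "{..<r}"] unfolding all by simp
qed

lemma regular: "\<forall>x\<in>V. card {y \<in> V. E x y} = al * m * r"
proof
  fix x assume x: "x \<in> V"
  have "{y \<in> V. E x y} = nbrs x" using Gam_1_iff[OF x] adj_in_V by blast
  then show "card {y \<in> V. E x y} = al * m * r" using card_nbrs[OF x] by simp
qed

lemma mem_line_iff: "w \<in> line y t c \<longleftrightarrow> w = y \<or> (w \<in> nbrs y \<and> coord y t w = c)"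
  unfolding line_def by blast

lemma line_subset_V: "y \<in> V \<Longrightarrow> line y t c \<subseteq> V"
  unfolding line_def using nbrs_subset_V by auto

lemma finite_line: "finite (line y t c)"
  unfolding line_def using finite_nbrs by auto

lemma card_line:
  assumes y: "y \<in> V" and c: "c < side t"
  shows "card (line y t c) = 1 + al * side (\<not> t)"
proof -
  have "{u \<in> nbrs y. coord y t u = c} = {u \<in> nbrs y. coord y t u \<in> {c} \<and> coord y (\<not> t) u \<in> {..<side (\<not> t)}}"
    using coord_less[OF y] by auto
  then have "card {u \<in> nbrs y. coord y t u = c} = al * side (\<not> t)"
    using card_coords[OF y, of "{c}" t "{..<side (\<not> t)}"] c by simp
  then show ?thesis unfolding line_def using finite_nbrs not_in_nbrs by simp
qed

lemma line_clique:
  assumes y: "y \<in> V"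
  shows "is_clique V E (line y t c)"
  unfolding is_clique_def
proof (intro conjI ballI impI)
  show "line y t c \<subseteq> V" using line_subset_V[OF y] .
next
  fix u v assume u: "u \<in> line y t c" and v: "v \<in> line y t c" and uv: "u \<noteq> v"
  consider "u = y" | "v = y" | "u \<in> nbrs y" "v \<in> nbrs y" "coord y t u = coord y t v"
    using u v unfolding mem_line_iff by auto
  then show "E u v"
  proof cases
    case 1
    then show ?thesis using v uv Gam_1_iff[OF y] unfolding mem_line_iff by auto
  next
    case 2
    then show ?thesis using u uv Gam_1_iff[OF y] adj_sym unfolding mem_line_iff by auto
  next
    case 3
    then show ?thesis using adj_nbrs_iff[OF y] uv by (cases t) auto
  qed
qed

lemma clique_subset_line:
  assumes y: "y \<in> V" and K: "is_clique V E K" and yK: "y \<in> K"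
  shows "\<exists>t c. c < side t \<and> K \<subseteq> line y t c"
proof -
  have adj: "E a b" if "a \<in> K" "b \<in> K" "a \<noteq> b" for a b
    using K that unfolding is_clique_def by blast
  have K_nbrs: "K - {y} \<subseteq> nbrs y"
  proof
    fix u assume "u \<in> K - {y}"
    then have "E y u" using adj[OF yK] by blast
    then show "u \<in> nbrs y" using Gam_1_iff[OF y] by blast
  qed
  have "coord y False a = coord y False b \<or> coord y True a = coord y True b"
    if a: "a \<in> K - {y}" and b: "b \<in> K - {y}" and ab: "a \<noteq> b" for a b
    using adj[OF _ _ ab] adj_nbrs_iff[OF y] K_nbrs a b by blast
  then have "\<forall>a\<in>K - {y}. \<forall>b\<in>K - {y}. a \<noteq> b \<longrightarrow>
      coord y False a = coord y False b \<or> coord y True a = coord y True b"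
    by blast
  then have "(\<forall>a\<in>K - {y}. \<forall>b\<in>K - {y}. coord y False a = coord y False b) \<or>
      (\<forall>a\<in>K - {y}. \<forall>b\<in>K - {y}. coord y True a = coord y True b)"
    by (rule pairwise_share_coord)
  then obtain t where t: "\<forall>a\<in>K - {y}. \<forall>b\<in>K - {y}. coord y t a = coord y t b"
    by blast
  show ?thesis
  proof (cases "K - {y} = {}")
    case True
    then have "K \<subseteq> line y t 0" unfolding line_def by blast
    moreover have "0 < side t" using side_ge_2[of t] by simp
    ultimately show ?thesis by blast
  next
    case False
    then obtain u where u: "u \<in> K - {y}" by blast
    have "w \<in> line y t (coord y t u)" if w: "w \<in> K" for w
    proof (cases "w = y")
      case True
      then show ?thesis unfolding mem_line_iff by simp
    next
      case False
      then have "w \<in> K - {y}" using w by blast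
      then show ?thesis using t u K_nbrs unfolding mem_line_iff by blast
    qed
    then have "K \<subseteq> line y t (coord y t u)" by blast
    moreover have "coord y t u < side t" using coord_less[OF y] K_nbrs u by blast
    ultimately show ?thesis by blast
  qed
qed

lemma max_clique_line:
  assumes y: "y \<in> V" and c: "c < side t"
  shows "max_clique V E (line y t c)"
  unfolding max_clique_def
proof (intro conjI allI impI)
  show "is_clique V E (line y t c)" by (rule line_clique[OF y])
next
  fix K assume K: "is_clique V E K \<and> line y t c \<subseteq> K"
  then have yK: "y \<in> K" unfolding line_def by auto
  obtain t' c' where c': "c' < side t'" and K_sub: "K \<subseteq> line y t' c'"
    using clique_subset_line[OF y _ yK] K by blast
  have sub: "line y t c \<subseteq> line y t' c'" using K K_sub by blast
  define d where "d = (if c' = 0 then 1 else (0::nat))"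
  have d: "d < side (\<not> t)" "d \<noteq> c'" using side_ge_2[of "\<not> t"] unfolding d_def by auto
  obtain u where u: "u \<in> nbrs y" "coord y t u = c" "coord y (\<not> t) u = d"
    using exists_nbr_coords[OF y c d(1)] by blast
  then have "u \<in> line y t c" unfolding mem_line_iff by simp
  then have "u \<in> line y t' c'" using sub by blast
  then have "t' = t \<and> c' = c" using u d not_in_nbrs unfolding mem_line_iff by (cases t; cases t') auto
  then have "K \<subseteq> line y t c" using K_sub by simp
  then show "K = line y t c" using K by blast
qed

lemma max_clique_eq_line:
  assumes y: "y \<in> V" and K: "max_clique V E K" and yK: "y \<in> K"
  shows "\<exists>t c. c < side t \<and> K = line y t c"
proof -
  obtain t c where c: "c < side t" and "K \<subseteq> line y t c"
    using clique_subset_line[OF y _ yK] K unfolding max_clique_def by blast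
  then have "K = line y t c" using K line_clique[OF y] unfolding max_clique_def by blast
  then show ?thesis using c by blast
qed

lemma line_through:
  assumes y: "y \<in> V" and c: "c < side t" and w: "w \<in> line y t c"
  shows "\<exists>c'. c' < side t \<and> line y t c = line w t c'"
proof -
  have wV: "w \<in> V" using line_subset_V[OF y] w by blast
  obtain t' c' where c': "c' < side t'" and eq: "line y t c = line w t' c'"
    using max_clique_eq_line[OF wV max_clique_line[OF y c] w] by blast
  have "side (\<not> t) = side (\<not> t')"
    using card_line[OF y c] card_line[OF wV c'] eq al_pos by simp
  then have "t' = t" using r_less_m unfolding side_def by (cases t; cases t') auto
  then show ?thesis using c' eq by blast
qed

lemma line_inj:
  assumes y: "y \<in> V" and c: "c < side t" and eq: "line y t c = line y t c'"
  shows "c = c'"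
proof -
  obtain u where u: "u \<in> nbrs y" "coord y t u = c" using exists_nbr_coord[OF y c] by blast
  then have "u \<in> line y t c" unfolding mem_line_iff by simp
  then have "u \<in> line y t c'" using eq by simp
  then show ?thesis using u not_in_nbrs unfolding mem_line_iff by auto
qed

lemma nbr_gdist:
  assumes x: "x \<in> V" and y: "y \<in> V" and u: "u \<in> nbrs y"
  shows "gdist E x u \<le> gdist E x y + 1" and "gdist E x y \<le> gdist E x u + 1"
proof -
  have e: "E y u" using Gam_1_iff[OF y] u by blast
  show "gdist E x u \<le> gdist E x y + 1" using gdist_adj_le[OF x e] .
  show "gdist E x y \<le> gdist E x u + 1" using gdist_adj_le[OF x adj_sym[OF e]] .
qed

lemma rows_cols_is_cext_grid:
  assumes y: "y \<in> V" and X: "X \<subseteq> {..<m}" and Y: "Y \<subseteq> {..<r}"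
  shows "is_cext_grid {u \<in> nbrs y. coord y False u \<in> X \<and> coord y True u \<in> Y} E al (card X) (card Y)"
proof -
  let ?S = "{u \<in> nbrs y. coord y False u \<in> X \<and> coord y True u \<in> Y}"
  let ?G = "cext_V al (grid_V (card X) (card Y))"
  obtain eX where eX: "bij_betw eX X {0..<card X}"
    using ex_bij_betw_finite_nat finite_subset[OF X finite_lessThan] by blast
  obtain eY where eY: "bij_betw eY Y {0..<card Y}"
    using ex_bij_betw_finite_nat finite_subset[OF Y finite_lessThan] by blast
  define f where "f = map_prod (map_prod eX eY) id \<circ> grid_iso y"
  have f_eq: "f u = ((eX (coord y False u), eY (coord y True u)), snd (grid_iso y u))" for u
    unfolding f_def coord_def by (simp add: map_prod_def split_beta)
  have "bij_betw (map_prod (map_prod eX eY) id) ((X \<times> Y) \<times> {..<al})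
      (({0..<card X} \<times> {0..<card Y}) \<times> {..<al})"
    by (intro bij_betw_map_prod eX eY bij_betw_id)
  then have bij: "bij_betw f ?S ?G"
    unfolding f_def cext_V_def grid_V_def atLeast0LessThan
    using bij_betw_trans[OF bij_betw_grid_iso_coords[OF y X Y]] by blast
  have adj: "induced E ?S u v \<longleftrightarrow> cext_E al (grid_V (card X) (card Y)) (grid_E (card X) (card Y)) (f u) (f v)"
    if u: "u \<in> ?S" and v: "v \<in> ?S" for u v
  proof -
    have "induced E ?S u v \<longleftrightarrow> E u v" using u v unfolding induced_def by simp
    also have "\<dots> \<longleftrightarrow> u \<noteq> v \<and> (coord y False u = coord y False v \<or> coord y True u = coord y True v)"
      using adj_nbrs_iff[OF y] u v by blast
    also have "\<dots> \<longleftrightarrow> f u \<noteq> f v \<and>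
        (eX (coord y False u) = eX (coord y False v) \<or> eY (coord y True u) = eY (coord y True v))"
      using inj_on_eq_iff[OF bij_betw_imp_inj_on[OF bij] u v]
        inj_on_eq_iff[OF bij_betw_imp_inj_on[OF eX]] inj_on_eq_iff[OF bij_betw_imp_inj_on[OF eY]] u v
      by auto
    also have "\<dots> \<longleftrightarrow> cext_E al (grid_V (card X) (card Y)) (grid_E (card X) (card Y)) (f u) (f v)"
      using cext_grid_adj_iff[OF bij_betw_apply[OF bij u] bij_betw_apply[OF bij v]] f_eq by simp
    finally show ?thesis .
  qed
  show ?thesis unfolding is_cext_grid_def graph_iso_def using bij adj by blast
qed

lemma outside_eq_rows_cols:
  assumes y: "y \<in> V"
  shows "{u \<in> nbrs y. \<forall>t. coord y t u \<notin> A t}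
    = {u \<in> nbrs y. coord y False u \<in> {..<m} - A False \<and> coord y True u \<in> {..<r} - A True}"
  using coord_less[OF y, of _ False] coord_less[OF y, of _ True] unfolding side_def
  by (auto simp: all_bool_eq)

lemma card_side_diff:
  assumes card_A: "\<forall>t. card (A t) = k" and A: "\<forall>t. A t \<subseteq> {..<side t}"
  shows "card ({..<side t} - A t) = side t - k"
proof -
  have sub: "A t \<subseteq> {..<side t}" using A by blast
  show ?thesis using card_Diff_subset[OF finite_subset[OF sub finite_lessThan] sub] card_A by simp
qed

lemma card_outside:
  assumes y: "y \<in> V" and card_A: "\<forall>t. card (A t) = k" and A: "\<forall>t. A t \<subseteq> {..<side t}"
  shows "card {u \<in> nbrs y. \<forall>t. coord y t u \<notin> A t} = al * (m - k) * (r - k)"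
  using card_rows_cols[OF y, of "{..<m} - A False" "{..<r} - A True"]
    card_side_diff[OF card_A A, of False] card_side_diff[OF card_A A, of True]
  unfolding outside_eq_rows_cols[OF y] side_def by auto

lemma outside_is_cext_grid:
  assumes y: "y \<in> V" and card_A: "\<forall>t. card (A t) = k" and A: "\<forall>t. A t \<subseteq> {..<side t}"
  shows "is_cext_grid {u \<in> nbrs y. \<forall>t. coord y t u \<notin> A t} E al (m - k) (r - k)"
  using rows_cols_is_cext_grid[OF y, of "{..<m} - A False" "{..<r} - A True"]
    card_side_diff[OF card_A A, of False] card_side_diff[OF card_A A, of True]
  unfolding outside_eq_rows_cols[OF y] side_def by auto

definition big_lines :: "'a set set" where
  "big_lines = {line y True c | y c. y \<in> V \<and> c < r}"

lemma finite_big_lines: "finite big_lines"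
proof -
  have "big_lines \<subseteq> Pow V" unfolding big_lines_def using line_subset_V by blast
  then show ?thesis using finite_V finite_subset by (metis finite_Pow_iff)
qed

lemma big_lines_through:
  assumes u: "u \<in> V"
  shows "{L \<in> big_lines. u \<in> L} = line u True ` {..<r}"
proof
  show "{L \<in> big_lines. u \<in> L} \<subseteq> line u True ` {..<r}"
  proof
    fix L assume "L \<in> {L \<in> big_lines. u \<in> L}"
    then obtain y c where y: "y \<in> V" and c: "c < r" and L: "L = line y True c" and uL: "u \<in> L"
      unfolding big_lines_def by blast
    have "c < side True" using c by (simp add: side_def)
    then obtain c' where "c' < side True" and "line y True c = line u True c'"
      using line_through[OF y _ uL[unfolded L]] by blast
    then show "L \<in> line u True ` {..<r}" using L by (auto simp: side_def)
  qed
next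
  show "line u True ` {..<r} \<subseteq> {L \<in> big_lines. u \<in> L}"
    unfolding big_lines_def line_def using u by blast
qed

lemma card_big_lines_through:
  assumes u: "u \<in> V"
  shows "card {L \<in> big_lines. u \<in> L} = r"
proof -
  have "inj_on (line u True) {..<r}"
    using line_inj[OF u, of _ True] unfolding inj_on_def side_def by auto
  then show ?thesis using big_lines_through[OF u] by (simp add: card_image)
qed

lemma card_big_lines_through_edge:
  assumes e: "E u v"
  shows "card {L \<in> big_lines. u \<in> L \<and> v \<in> L} = 1"
proof -
  have u: "u \<in> V" using adj_in_V[OF e] by blast
  have v: "v \<in> nbrs u" using Gam_1_iff[OF u] e by blast
  have uv: "u \<noteq> v" using e adj_irrefl by auto
  have "{L \<in> big_lines. u \<in> L \<and> v \<in> L} = {line u True (coord u True v)}"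
  proof
    show "{L \<in> big_lines. u \<in> L \<and> v \<in> L} \<subseteq> {line u True (coord u True v)}"
    proof
      fix L assume L: "L \<in> {L \<in> big_lines. u \<in> L \<and> v \<in> L}"
      then have "L \<in> line u True ` {..<r}" using big_lines_through[OF u] by blast
      then obtain c where c: "c < r" "L = line u True c" by blast
      then have "coord u True v = c" using L uv by (auto simp: mem_line_iff)
      then show "L \<in> {line u True (coord u True v)}" using c by simp
    qed
  next
    have "coord u True v < r" using coord_less[OF u v, of True] unfolding side_def by simp
    then have "line u True (coord u True v) \<in> big_lines" unfolding big_lines_def using u by blast
    moreover have "u \<in> line u True (coord u True v)" "v \<in> line u True (coord u True v)"
      unfolding mem_line_iff using v by auto
    ultimately show "{line u True (coord u True v)} \<subseteq> {L \<in> big_lines. u \<in> L \<and> v \<in> L}"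
      by blast
  qed
  then show ?thesis by simp
qed

lemma adj_eigenvalue_ge:
  assumes "\<theta> \<in> adj_eigenvalues V E"
  shows "- real r \<le> \<theta>"
proof -
  have cliques: "\<forall>L\<in>big_lines. is_clique V E L" unfolding big_lines_def using line_clique by blast
  have cover: "\<forall>u\<in>V. card {L \<in> big_lines. u \<in> L} = r" using card_big_lines_through by blast
  have edges: "\<forall>u v. E u v \<longrightarrow> card {L \<in> big_lines. u \<in> L \<and> v \<in> L} = 1"
    using card_big_lines_through_edge by blast
  show ?thesis by (rule adj_eigenvalue_ge_clique_cover[OF finite_big_lines cliques cover edges assms])
qed

end

section \<open>Delsarte cliques and assemblies\<close>

locale geometric_local_grid = local_grid +
  fixes C :: "'a set set"
  assumes V_ne: "V \<noteq> {}" and geometric: "geometric V E C"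
begin

lemma C_delsarte: "Q \<in> C \<Longrightarrow> delsarte_clique V E Q"
  using geometric unfolding geometric_def by blast

lemma C_clique: "Q \<in> C \<Longrightarrow> is_clique V E Q"
  using C_delsarte unfolding delsarte_clique_def by blast

lemma C_subset_V: "Q \<in> C \<Longrightarrow> Q \<subseteq> V"
  using C_clique unfolding is_clique_def by blast

text \<open>All members of \<open>C\<close> have the same size, and one of them contains an edge.\<close>

lemma card_C_ge_2:
  assumes Q: "Q \<in> C"
  shows "2 \<le> card Q"
proof -
  obtain x where x: "x \<in> V" using V_ne by blast
  have "card (nbrs x) \<noteq> 0" using card_nbrs[OF x] al_pos r_ge_2 r_less_m by simp
  then obtain u where "u \<in> nbrs x" by fastforce
  then have e: "E x u" using Gam_1_iff[OF x] by blast
  then obtain Q0 where Q0: "Q0 \<in> C" "x \<in> Q0" "u \<in> Q0" using geometric unfolding geometric_def by blast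
  have "x \<noteq> u" using e adj_irrefl by auto
  moreover have "card {x, u} \<le> card Q0"
    using Q0 by (intro card_mono[OF finite_subset[OF C_subset_V[OF Q0(1)] finite_V]]) auto
  ultimately have "2 \<le> card Q0" by simp
  moreover have "real (card Q) = real (card Q0)"
    using C_delsarte[OF Q] C_delsarte[OF Q0(1)] unfolding delsarte_clique_def by simp
  ultimately show ?thesis by simp
qed

lemma card_C_ge:
  assumes Q: "Q \<in> C"
  shows "1 + al * m \<le> card Q"
proof -
  have eig: "\<forall>\<theta>\<in>adj_eigenvalues V E. - real r \<le> \<theta>" using adj_eigenvalue_ge by blast
  have "1 + real (al * m * r) / real r \<le> real (card Q)"
    by (rule delsarte_clique_card_ge[OF V_ne regular eig C_delsarte[OF Q] card_C_ge_2[OF Q]])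
  moreover have "real (al * m * r) / real r = real (al * m)" using r_ge_2 by simp
  ultimately have "real (1 + al * m) \<le> real (card Q)" by simp
  then show ?thesis by (simp only: of_nat_le_iff)
qed

lemma C_eq_line:
  assumes Q: "Q \<in> C" and yQ: "y \<in> Q"
  shows "\<exists>c<r. Q = line y True c"
proof -
  have y: "y \<in> V" using C_subset_V[OF Q] yQ by blast
  obtain t c where c: "c < side t" and sub: "Q \<subseteq> line y t c"
    using clique_subset_line[OF y C_clique[OF Q] yQ] by blast
  have card_le: "card Q \<le> card (line y t c)" by (rule card_mono[OF finite_line sub])
  have t: "t"
  proof (rule ccontr)
    assume "\<not> t"
    then have "card Q \<le> 1 + al * r" using card_le card_line[OF y c] unfolding side_def by simp
    moreover have "al * r < al * m" using al_pos r_less_m by simp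
    ultimately show False using card_C_ge[OF Q] by linarith
  qed
  have "card (line y t c) = 1 + al * m" using card_line[OF y c] t unfolding side_def by simp
  then have "card Q = card (line y t c)" using card_C_ge[OF Q] card_le by linarith
  then have "Q = line y t c" by (rule card_subset_eq[OF finite_line sub])
  moreover have "c < r" using c t unfolding side_def by simp
  ultimately show ?thesis using t by auto
qed

lemma line_in_C:
  assumes y: "y \<in> V" and c: "c < r"
  shows "line y True c \<in> C"
proof -
  have "c < side True" using c by (simp add: side_def)
  then obtain u where u: "u \<in> nbrs y" "coord y True u = c" using exists_nbr_coord[OF y] by blast
  have e: "E y u" using Gam_1_iff[OF y] u by blast
  obtain Q where Q: "Q \<in> C" "y \<in> Q" "u \<in> Q" using geometric e unfolding geometric_def by blast
  obtain c' where c': "Q = line y True c'" using C_eq_line[OF Q(1,2)] by blast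
  have "u \<noteq> y" using e adj_irrefl by auto
  then have "c' = c" using Q(3) c' u by (simp add: mem_line_iff)
  then show ?thesis using Q c' by simp
qed

lemma assembly_iff_line:
  assumes y: "y \<in> V"
  shows "assembly V E C M \<and> y \<in> M \<longleftrightarrow> (\<exists>c<m. M = line y False c)"
proof
  assume a: "assembly V E C M \<and> y \<in> M"
  then obtain t c where c: "c < side t" and M: "M = line y t c"
    using max_clique_eq_line[OF y] unfolding assembly_def by blast
  have "\<not> t"
  proof
    assume t
    then have "M \<in> C" using line_in_C[OF y, of c] c M unfolding side_def by simp
    then show False using a unfolding assembly_def by blast
  qed
  then show "\<exists>c<m. M = line y False c" using c M unfolding side_def by auto
next
  assume "\<exists>c<m. M = line y False c"
  then obtain c where c: "c < m" and M: "M = line y False c" by blast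
  have max: "max_clique V E M" using max_clique_line[OF y, of c False] c M unfolding side_def by simp
  have "M \<notin> C"
  proof
    assume "M \<in> C"
    then have "1 + al * m \<le> card M" by (rule card_C_ge)
    moreover have "card M = 1 + al * r" using card_line[OF y, of c False] c M unfolding side_def by simp
    moreover have "al * r < al * m" using al_pos r_less_m by simp
    ultimately show False by linarith
  qed
  moreover have "y \<in> M" using M unfolding line_def by simp
  ultimately show "assembly V E C M \<and> y \<in> M" using max unfolding assembly_def by simp
qed

end

section \<open>Distance layers in the local grids\<close>

locale classical_local_grid = geometric_local_grid +
  fixes D :: nat and q :: "nat \<Rightarrow> nat"
  assumes gdist_le_D: "\<forall>x\<in>V. \<forall>y\<in>V. gdist E x y \<le> D"
    and card_c: "\<forall>x\<in>V. \<forall>y\<in>V. 1 \<le> gdist E x y \<longrightarrow>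
       card (Gam V E (gdist E x y - 1) x \<inter> Gam V E 1 y) = q (gdist E x y) * (1 + al * q (gdist E x y - 1))"
    and card_b: "\<forall>x\<in>V. \<forall>y\<in>V. gdist E x y < D \<longrightarrow>
       card (Gam V E (gdist E x y + 1) x \<inter> Gam V E 1 y) = al * (m - q (gdist E x y)) * (r - q (gdist E x y))"
    and q_0: "q 0 = 0" and q_D: "q D = r"
begin

definition nearer :: "'a \<Rightarrow> 'a \<Rightarrow> 'a set" where
  "nearer x y = {u \<in> nbrs y. Suc (gdist E x u) = gdist E x y}"

definition farther :: "'a \<Rightarrow> 'a \<Rightarrow> 'a set" where
  "farther x y = {u \<in> nbrs y. gdist E x u = Suc (gdist E x y)}"

abbreviation nearer_coords :: "'a \<Rightarrow> 'a \<Rightarrow> bool \<Rightarrow> nat set" where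
  "nearer_coords x y t \<equiv> coord y t ` nearer x y"

text \<open>The invariant proved by induction on \<open>h = d(x, y)\<close>, with \<open>q h\<close> standing for \<open>[h]\<close>:
  the neighbours of \<open>y\<close> nearer to \<open>x\<close> occupy \<open>q h\<close> rows and \<open>q h\<close> columns of the grid at
  \<open>y\<close>, and the neighbours farther from \<open>x\<close> are exactly those outside these rows and columns.\<close>

definition grid_profile :: "'a \<Rightarrow> 'a \<Rightarrow> bool" where
  "grid_profile x y \<longleftrightarrow> (\<forall>t. card (nearer_coords x y t) = q (gdist E x y)) \<and>
     farther x y = {u \<in> nbrs y. \<forall>t. coord y t u \<notin> nearer_coords x y t}"

lemma nearer_coords_subset:
  assumes y: "y \<in> V"
  shows "nearer_coords x y t \<subseteq> {..<side t}"
  unfolding nearer_def using coord_less[OF y] by auto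

lemma card_nearer:
  assumes x: "x \<in> V" and y: "y \<in> V" and d: "gdist E x y = Suc h"
  shows "card (nearer x y) = q (Suc h) * (1 + al * q h)"
proof -
  have eq: "Gam V E (gdist E x y - 1) x \<inter> Gam V E 1 y = nearer x y"
    using d unfolding Gam_def nearer_def by auto
  show ?thesis using card_c[rule_format, OF x y] d unfolding eq by simp
qed

lemma card_farther:
  assumes x: "x \<in> V" and y: "y \<in> V" and d: "gdist E x y < D"
  shows "card (farther x y) = al * (m - q (gdist E x y)) * (r - q (gdist E x y))"
proof -
  have eq: "Gam V E (gdist E x y + 1) x \<inter> Gam V E 1 y = farther x y"
    unfolding Gam_def farther_def by auto
  show ?thesis using card_b[rule_format, OF x y d] unfolding eq .
qed

lemma grid_profile_self:
  assumes x: "x \<in> V"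
  shows "grid_profile x x"
proof -
  have "nearer x x = {}" unfolding nearer_def by simp
  moreover have "farther x x = nbrs x" unfolding farther_def Gam_def by auto
  ultimately show ?thesis unfolding grid_profile_def using q_0 by simp
qed

lemma line_coord_not_nearer:
  assumes nearest: "\<forall>u\<in>line w t c. gdist E x w \<le> gdist E x u"
  shows "c \<notin> nearer_coords x w t"
proof
  assume "c \<in> nearer_coords x w t"
  then obtain u where u: "u \<in> nearer x w" "coord w t u = c" by blast
  then have "u \<in> line w t c" unfolding nearer_def mem_line_iff by simp
  then have "gdist E x w \<le> gdist E x u" using nearest by blast
  moreover have "Suc (gdist E x u) = gdist E x w" using u(1) unfolding nearer_def by blast
  ultimately show False by simp
qed

lemma gdist_on_line_iff:
  assumes x: "x \<in> V" and w: "w \<in> V" and P: "grid_profile x w"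
    and nearest: "\<forall>u\<in>line w t c. gdist E x w \<le> gdist E x u"
    and u: "u \<in> nbrs w" "coord w t u = c"
  shows "gdist E x u = gdist E x w \<longleftrightarrow> coord w (\<not> t) u \<in> nearer_coords x w (\<not> t)"
proof -
  have "u \<in> line w t c" using u unfolding mem_line_iff by simp
  then have "gdist E x w \<le> gdist E x u" using nearest by blast
  moreover have "gdist E x u \<le> gdist E x w + 1" using nbr_gdist(1)[OF x w u(1)] .
  moreover have "gdist E x u = gdist E x w + 1 \<longleftrightarrow> (\<forall>t'. coord w t' u \<notin> nearer_coords x w t')"
  proof -
    have "u \<in> farther x w \<longleftrightarrow> (\<forall>t'. coord w t' u \<notin> nearer_coords x w t')"
      using P u(1) unfolding grid_profile_def by simp
    then show ?thesis using u(1) unfolding farther_def by simp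
  qed
  moreover have "(\<forall>t'. coord w t' u \<notin> nearer_coords x w t') \<longleftrightarrow> coord w (\<not> t) u \<notin> nearer_coords x w (\<not> t)"
    using line_coord_not_nearer[OF nearest] u(2)
      all_bool_iff[of "\<lambda>t'. coord w t' u \<notin> nearer_coords x w t'" t] by simp
  ultimately show ?thesis by auto
qed

lemma card_line_nearest:
  assumes x: "x \<in> V" and w: "w \<in> V" and P: "grid_profile x w" and c: "c < side t"
    and nearest: "\<forall>u\<in>line w t c. gdist E x w \<le> gdist E x u"
  shows "card {u \<in> line w t c. gdist E x u = gdist E x w} = 1 + al * q (gdist E x w)"
proof -
  let ?S = "{u \<in> nbrs w. coord w t u \<in> {c} \<and> coord w (\<not> t) u \<in> nearer_coords x w (\<not> t)}"
  have "{u \<in> line w t c. gdist E x u = gdist E x w} = insert w ?S"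
    using gdist_on_line_iff[OF x w P nearest] unfolding line_def by auto
  moreover have "card ?S = al * q (gdist E x w)"
    using card_coords[OF w, of "{c}" t "nearer_coords x w (\<not> t)"] c nearer_coords_subset[OF w] P
    unfolding grid_profile_def by simp
  ultimately show ?thesis using finite_nbrs not_in_nbrs by simp
qed

lemma card_nearer_coords:
  assumes x: "x \<in> V" and y: "y \<in> V" and d: "gdist E x y = Suc h"
    and IH: "\<forall>w\<in>V. gdist E x w = h \<longrightarrow> grid_profile x w"
  shows "card (nearer_coords x y t) = q (Suc h)"
proof -
  define S where "S c = {u \<in> nearer x y. coord y t u = c}" for c
  have fibre: "card (S c) = 1 + al * q h" if c: "c \<in> nearer_coords x y t" for c
  proof -
    obtain w where w: "w \<in> nearer x y" "coord y t w = c" using c by blast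
    have wV: "w \<in> V" and wh: "gdist E x w = h" using w(1) nbrs_subset_V d unfolding nearer_def by auto
    have c_lt: "c < side t" using coord_less[OF y, of w t] w unfolding nearer_def by auto
    have "w \<in> line y t c" using w unfolding nearer_def mem_line_iff by simp
    then obtain c' where c': "c' < side t" and L: "line y t c = line w t c'"
      using line_through[OF y c_lt] by blast
    have "S c = {u \<in> line y t c. gdist E x u = h}"
      unfolding S_def nearer_def line_def using d by auto
    then have S_eq: "S c = {u \<in> line w t c'. gdist E x u = gdist E x w}" using L wh by simp
    have nearest: "\<forall>u\<in>line w t c'. gdist E x w \<le> gdist E x u"
    proof
      fix u assume "u \<in> line w t c'"
      then have "u \<in> line y t c" using L by simp
      then have "u = y \<or> u \<in> nbrs y" unfolding mem_line_iff by blast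
      then show "gdist E x w \<le> gdist E x u" using nbr_gdist(2)[OF x y] d wh by fastforce
    qed
    show ?thesis
      using card_line_nearest[OF x wV IH[rule_format, OF wV wh] c' nearest] S_eq wh by simp
  qed
  have "nearer x y = (\<Union>c\<in>nearer_coords x y t. S c)" unfolding S_def by blast
  then have "card (nearer x y) = card (\<Union>c\<in>nearer_coords x y t. S c)" by (rule arg_cong)
  also have "\<dots> = (\<Sum>c\<in>nearer_coords x y t. card (S c))"
    using finite_nbrs by (intro card_UN_disjoint) (auto simp: S_def nearer_def)
  also have "\<dots> = card (nearer_coords x y t) * (1 + al * q h)" using fibre by simp
  finally have "card (nearer_coords x y t) * (1 + al * q h) = q (Suc h) * (1 + al * q h)"
    using card_nearer[OF x y d] by metis
  moreover have "1 + al * q h \<noteq> 0" by simp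
  ultimately show ?thesis by (metis mult_right_cancel)
qed

lemma farther_eq_outside:
  assumes x: "x \<in> V" and y: "y \<in> V" and d: "gdist E x y < D"
    and coords: "\<forall>t. card (nearer_coords x y t) = q (gdist E x y)"
  shows "farther x y = {u \<in> nbrs y. \<forall>t. coord y t u \<notin> nearer_coords x y t}"
proof -
  let ?O = "{u \<in> nbrs y. \<forall>t. coord y t u \<notin> nearer_coords x y t}"
  have sub: "farther x y \<subseteq> ?O"
  proof
    fix u assume u: "u \<in> farther x y"
    have "coord y t u \<notin> nearer_coords x y t" for t
    proof
      assume "coord y t u \<in> nearer_coords x y t"
      then obtain v where v: "v \<in> nearer x y" "coord y t v = coord y t u" by auto
      have "u \<noteq> v" using u v(1) unfolding farther_def nearer_def by auto
      then have "E u v" using adj_nbrs_iff[OF y] u v unfolding farther_def nearer_def by (cases t) auto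
      then have "gdist E x u \<le> gdist E x v + 1" using gdist_adj_le[OF x] adj_sym by blast
      then show False using u v(1) unfolding farther_def nearer_def by simp
    qed
    then show "u \<in> ?O" using u unfolding farther_def by blast
  qed
  have "card ?O = al * (m - q (gdist E x y)) * (r - q (gdist E x y))"
    using card_outside[OF y coords] nearer_coords_subset[OF y] by blast
  then have "card (farther x y) = card ?O" using card_farther[OF x y d] by simp
  moreover have "finite ?O" using finite_nbrs by simp
  ultimately show ?thesis using card_subset_eq[OF _ sub] by blast
qed

lemma grid_profile_holds:
  assumes x: "x \<in> V" and y: "y \<in> V" and d: "gdist E x y < D"
  shows "grid_profile x y"
proof -
  have "\<forall>y\<in>V. gdist E x y = h \<longrightarrow> grid_profile x y" if "h < D" for h
    using that
  proof (induction h)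
    case 0
    then show ?case using grid_profile_self[OF x] gdist_eq_0_imp_eq[OF x] by blast
  next
    case (Suc h)
    have IH: "\<forall>w\<in>V. gdist E x w = h \<longrightarrow> grid_profile x w" using Suc.IH Suc.prems by simp
    show ?case
    proof (intro ballI impI)
      fix y assume y: "y \<in> V" and d: "gdist E x y = Suc h"
      have coords: "\<forall>t. card (nearer_coords x y t) = q (gdist E x y)"
        using card_nearer_coords[OF x y d IH] d by simp
      show "grid_profile x y"
        unfolding grid_profile_def using coords farther_eq_outside[OF x y _ coords] d Suc.prems by simp
    qed
  qed
  then show ?thesis using y d by blast
qed

lemma card_assembly_nearest:
  assumes M: "assembly V E C M" and x: "x \<in> V" and i: "i \<le> D" and sd: "setdist E x M = i"
  shows "card {y \<in> M. gdist E x y = i} = 1 + al * q i"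
proof -
  have M_V: "M \<subseteq> V" using M unfolding assembly_def max_clique_def is_clique_def by blast
  have M_fin: "finite M" using M_V finite_V finite_subset by blast
  have "M \<noteq> {}"
  proof
    assume empty: "M = {}"
    obtain v where "v \<in> V" using V_ne by blast
    then have "is_clique V E {v}" unfolding is_clique_def by simp
    then show False using M empty unfolding assembly_def max_clique_def by blast
  qed
  then obtain z where z: "z \<in> M" "gdist E x z = i" using setdist_attained[OF M_fin] sd by blast
  have nearest: "\<forall>u\<in>M. i \<le> gdist E x u" using setdist_le[OF M_fin] sd by blast
  have zV: "z \<in> V" using z M_V by blast
  obtain c where c: "c < m" and M_line: "M = line z False c"
    using assembly_iff_line[OF zV] M z by blast
  show ?thesis
  proof (cases "i < D")
    case True
    have "c < side False" using c by (simp add: side_def)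
    moreover have "\<forall>u\<in>line z False c. gdist E x z \<le> gdist E x u" using nearest z M_line by simp
    ultimately show ?thesis
      using card_line_nearest[OF x zV grid_profile_holds[OF x zV]] True z M_line by simp
  next
    case False
    then have iD: "i = D" using i by simp
    have "gdist E x u = i" if "u \<in> M" for u
      using nearest gdist_le_D x M_V that iD by (meson le_antisym subsetD)
    then have "{y \<in> M. gdist E x y = i} = M" by blast
    moreover have "card M = 1 + al * r" using card_line[OF zV, of c False] c M_line unfolding side_def by simp
    ultimately show ?thesis using iD q_D by simp
  qed
qed

lemma assemblies_towards_eq:
  assumes x: "x \<in> V" and y: "y \<in> V" and d: "gdist E x y = Suc h"
  shows "{M. assembly V E C M \<and> y \<in> M \<and> setdist E x M = h} = line y False ` nearer_coords x y False"
proof (intro equalityI subsetI)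
  fix M assume "M \<in> {M. assembly V E C M \<and> y \<in> M \<and> setdist E x M = h}"
  then have a: "assembly V E C M \<and> y \<in> M" and sd: "setdist E x M = h" by auto
  obtain c where c: "c < m" and M: "M = line y False c" using assembly_iff_line[OF y] a by blast
  have "finite M" "M \<noteq> {}" using M a finite_line by auto
  then obtain u where u: "u \<in> M" "gdist E x u = h" using setdist_attained[of M E x] sd by auto
  have "u \<noteq> y" using u d by auto
  then have "u \<in> nearer x y" "coord y False u = c" using u M d by (auto simp: mem_line_iff nearer_def)
  then show "M \<in> line y False ` nearer_coords x y False" using M by force
next
  fix M assume "M \<in> line y False ` nearer_coords x y False"
  then obtain v where v: "v \<in> nearer x y" and M: "M = line y False (coord y False v)" by blast
  have v_nbr: "v \<in> nbrs y" and vh: "gdist E x v = h" using v d unfolding nearer_def by auto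
  have "coord y False v < m" using coord_less[OF y v_nbr, of False] unfolding side_def by simp
  then have a: "assembly V E C M \<and> y \<in> M" using assembly_iff_line[OF y] M by blast
  have near: "\<forall>u\<in>M. h \<le> gdist E x u"
  proof
    fix u assume "u \<in> M"
    then have "u = y \<or> u \<in> nbrs y" using M by (auto simp: mem_line_iff)
    then show "h \<le> gdist E x u" using nbr_gdist(2)[OF x y] d by fastforce
  qed
  have fin: "finite M" using M finite_line by simp
  have vM: "v \<in> M" using M v_nbr by (simp add: mem_line_iff)
  have "setdist E x M = h" by (rule setdist_eqI[OF fin vM vh near])
  then show "M \<in> {M. assembly V E C M \<and> y \<in> M \<and> setdist E x M = h}" using a by simp
qed

lemma card_assemblies_towards:
  assumes x: "x \<in> V" and y: "y \<in> V" and j: "1 \<le> j" "j \<le> D" and d: "gdist E x y = j"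
  shows "card {M. assembly V E C M \<and> y \<in> M \<and> setdist E x M = j - 1} = q j"
proof -
  obtain h where h: "j = Suc h" using j(1) by (cases j) auto
  have dh: "gdist E x y = Suc h" using d h by simp
  have "inj_on (line y False) (nearer_coords x y False)"
  proof (rule inj_onI)
    fix c c' assume "c \<in> nearer_coords x y False" "c' \<in> nearer_coords x y False"
      and "line y False c = line y False c'"
    then show "c = c'"
      using line_inj[OF y] nearer_coords_subset[OF y, where x=x and t=False] by (meson lessThan_iff subsetD)
  qed
  then have "card (line y False ` nearer_coords x y False) = card (nearer_coords x y False)"
    by (rule card_image)
  moreover have "\<forall>w\<in>V. gdist E x w = h \<longrightarrow> grid_profile x w" using grid_profile_holds[OF x] j h by auto
  ultimately show ?thesis using assemblies_towards_eq[OF x y dh] card_nearer_coords[OF x y dh] h by simp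
qed

lemma farther_is_cext_grid:
  assumes x: "x \<in> V" and y: "y \<in> V" and hD: "h < D" and d: "gdist E x y = h"
  shows "is_cext_grid (Gam V E (h + 1) x \<inter> Gam V E 1 y) E al (m - q h) (r - q h)"
proof -
  have P: "grid_profile x y" using grid_profile_holds[OF x y] hD d by simp
  have "Gam V E (h + 1) x \<inter> Gam V E 1 y = farther x y"
    using d unfolding Gam_def farther_def by auto
  also have "\<dots> = {u \<in> nbrs y. \<forall>t. coord y t u \<notin> nearer_coords x y t}"
    using P unfolding grid_profile_def by blast
  finally have eq: "Gam V E (h + 1) x \<inter> Gam V E 1 y = {u \<in> nbrs y. \<forall>t. coord y t u \<notin> nearer_coords x y t}" .
  have "\<forall>t. card (nearer_coords x y t) = q h" using P d unfolding grid_profile_def by simp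
  moreover have "\<forall>t. nearer_coords x y t \<subseteq> {..<side t}" using nearer_coords_subset[OF y] by blast
  ultimately show ?thesis unfolding eq by (rule outside_is_cext_grid[OF y])
qed

end

section \<open>Classical parameters\<close>

definition gauss_nat :: "int \<Rightarrow> nat \<Rightarrow> nat" where
  "gauss_nat b i = (\<Sum>k<i. nat b ^ k)"

lemma qnum_eq_gauss_nat:
  assumes "0 \<le> b" and "b \<noteq> 1"
  shows "qnum b i = real (gauss_nat b i)"
proof -
  have "real (gauss_nat b i) = (\<Sum>k<i. real_of_int b ^ k)"
    unfolding gauss_nat_def using assms(1) by simp
  also have "\<dots> = (real_of_int b ^ i - 1) / (real_of_int b - 1)"
    by (rule geometric_sum) (use assms(2) in simp)
  finally show ?thesis unfolding qnum_def by simp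
qed

lemma strict_mono_gauss_nat:
  assumes "0 < b"
  shows "strict_mono (gauss_nat b)"
  unfolding strict_mono_Suc_iff gauss_nat_def using assms by simp

lemma cl_c_gauss_nat:
  assumes "0 \<le> b" and "b \<noteq> 1"
  shows "cl_c b (real al) i = real (gauss_nat b i * (1 + al * gauss_nat b (i - 1)))"
  unfolding cl_c_def by (simp add: qnum_eq_gauss_nat[OF assms] algebra_simps)

lemma cl_b_gauss_nat:
  assumes "0 \<le> b" and "b \<noteq> 1" and "gauss_nat b i \<le> gauss_nat b D" and "gauss_nat b i \<le> m"
  shows "cl_b D b (real al) (real al * real m) i
    = real (al * (m - gauss_nat b i) * (gauss_nat b D - gauss_nat b i))"
proof -
  have "real (al * (m - gauss_nat b i) * (gauss_nat b D - gauss_nat b i))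
      = real al * (real m - real (gauss_nat b i)) * (real (gauss_nat b D) - real (gauss_nat b i))"
    using assms(3,4) by (simp add: of_nat_diff)
  then show ?thesis
    unfolding cl_b_def qnum_eq_gauss_nat[OF assms(1,2)] by (simp add: algebra_simps)
qed

lemma drg_classical_counts_gauss_nat:
  assumes drg: "drg_classical V E D b \<alpha> \<beta>" and b: "2 \<le> b"
    and al: "real al = \<alpha>" and \<beta>: "\<beta> = \<alpha> * real m" and r_less_m: "gauss_nat b D < m"
  shows "\<forall>x\<in>V. \<forall>y\<in>V. 1 \<le> gdist E x y \<longrightarrow>
      card (Gam V E (gdist E x y - 1) x \<inter> Gam V E 1 y)
        = gauss_nat b (gdist E x y) * (1 + al * gauss_nat b (gdist E x y - 1))"
    and "\<forall>x\<in>V. \<forall>y\<in>V. gdist E x y < D \<longrightarrow>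
      card (Gam V E (gdist E x y + 1) x \<inter> Gam V E 1 y)
        = al * (m - gauss_nat b (gdist E x y)) * (gauss_nat b D - gauss_nat b (gdist E x y))"
proof -
  have b0: "0 \<le> b" and b1: "b \<noteq> 1" using b by simp_all
  have sm: "strict_mono (gauss_nat b)" using b by (intro strict_mono_gauss_nat) simp
  show "\<forall>x\<in>V. \<forall>y\<in>V. 1 \<le> gdist E x y \<longrightarrow>
      card (Gam V E (gdist E x y - 1) x \<inter> Gam V E 1 y)
        = gauss_nat b (gdist E x y) * (1 + al * gauss_nat b (gdist E x y - 1))"
  proof (intro ballI impI)
    fix x y assume "x \<in> V" "y \<in> V" "1 \<le> gdist E x y"
    then have "real (card (Gam V E (gdist E x y - 1) x \<inter> Gam V E 1 y)) = cl_c b \<alpha> (gdist E x y)"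
      using drg unfolding drg_classical_def by blast
    then show "card (Gam V E (gdist E x y - 1) x \<inter> Gam V E 1 y)
        = gauss_nat b (gdist E x y) * (1 + al * gauss_nat b (gdist E x y - 1))"
      unfolding al[symmetric] cl_c_gauss_nat[OF b0 b1] by (simp only: of_nat_eq_iff)
  qed
  show "\<forall>x\<in>V. \<forall>y\<in>V. gdist E x y < D \<longrightarrow>
      card (Gam V E (gdist E x y + 1) x \<inter> Gam V E 1 y)
        = al * (m - gauss_nat b (gdist E x y)) * (gauss_nat b D - gauss_nat b (gdist E x y))"
  proof (intro ballI impI)
    fix x y assume "x \<in> V" "y \<in> V" and d: "gdist E x y < D"
    have le: "gauss_nat b (gdist E x y) \<le> gauss_nat b D" "gauss_nat b (gdist E x y) \<le> m"
      using strict_monoD[OF sm d] r_less_m by simp_all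
    have "real (card (Gam V E (gdist E x y + 1) x \<inter> Gam V E 1 y)) = cl_b D b \<alpha> \<beta> (gdist E x y)"
      using drg d \<open>x \<in> V\<close> \<open>y \<in> V\<close> unfolding drg_classical_def by blast
    then show "card (Gam V E (gdist E x y + 1) x \<inter> Gam V E 1 y)
        = al * (m - gauss_nat b (gdist E x y)) * (gauss_nat b D - gauss_nat b (gdist E x y))"
      unfolding \<beta> al[symmetric] cl_b_gauss_nat[OF b0 b1 le] by (simp only: of_nat_eq_iff)
  qed
qed

lemma drg_classical_local_grid:
  assumes drg: "drg_classical V E D b \<alpha> \<beta>"
    and b: "2 \<le> b" and \<alpha>: "1 \<le> \<alpha>" and D: "2 \<le> D" and geom: "geometric V E C"
    and local: "\<forall>x\<in>V. \<exists>s m n :: nat. real s = \<alpha> \<and> real m = \<beta> / \<alpha> \<and> real n = qnum b D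
                   \<and> is_cext_grid (Gam V E 1 x) E s m n"
    and \<beta>: "\<alpha> * qnum b D < \<beta>"
  obtains al m where "real al = \<alpha>" and "real m = \<beta> / \<alpha>"
    and "classical_local_grid V E al m (gauss_nat b D) C D (gauss_nat b)"
proof -
  let ?q = "gauss_nat b"
  have qnum: "qnum b i = real (?q i)" for i using qnum_eq_gauss_nat b by simp
  from drg have simple: "simple_graph V E" and conn: "connected_graph V E" and V_ne: "V \<noteq> {}"
    and diam: "diameter V E = D"
    unfolding drg_classical_def by blast+
  interpret fin_graph V E by (rule fin_graph.intro[OF simple])
  obtain x0 where "x0 \<in> V" using V_ne by blast
  then obtain al m where al: "real al = \<alpha>" and m: "real m = \<beta> / \<alpha>" using local by blast
  have \<beta>_eq: "\<beta> = \<alpha> * real m" using m \<alpha> by (simp add: field_simps)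
  have grid: "\<forall>x\<in>V. is_cext_grid (Gam V E 1 x) E al m (?q D)"
  proof
    fix x assume "x \<in> V"
    then obtain s m' n :: nat where "real s = \<alpha>" "real m' = \<beta> / \<alpha>" "real n = qnum b D"
      and g: "is_cext_grid (Gam V E 1 x) E s m' n" using local by blast
    then have "s = al" "m' = m" "n = ?q D" using al m qnum[of D] by simp_all
    then show "is_cext_grid (Gam V E 1 x) E al m (?q D)" using g by simp
  qed
  have al_pos: "1 \<le> al" using al \<alpha> by simp
  have r_less_m: "?q D < m"
  proof -
    have "\<alpha> * real (?q D) < \<alpha> * real m" using \<beta> \<beta>_eq qnum[of D] by simp
    then show ?thesis using \<alpha> by simp
  qed
  have "D \<le> ?q D" using strict_mono_gauss_nat b by (intro strict_mono_imp_increasing) simp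
  then have r_ge_2: "2 \<le> ?q D" using D by simp
  have dist_le: "\<forall>x\<in>V. \<forall>y\<in>V. gdist E x y \<le> D" using gdist_le_diameter diam by simp
  note counts = drg_classical_counts_gauss_nat[OF drg b al \<beta>_eq r_less_m]
  have q_0: "?q 0 = 0" by (simp add: gauss_nat_def)
  have "classical_local_grid V E al m (?q D) C D ?q"
    by unfold_locales (use simple conn grid al_pos r_ge_2 r_less_m V_ne geom dist_le counts q_0 in simp_all)
  then show ?thesis by (rule that[OF al m])
qed

theorem theorem26:
  fixes V :: "'a set" and E :: "'a \<Rightarrow> 'a \<Rightarrow> bool" and \<C> :: "'a set set"
    and D :: nat and b :: int and \<alpha> \<beta> :: real
  assumes drg: "drg_classical V E D b \<alpha> \<beta>"
    and hb: "b \<ge> 2" and h\<alpha>1: "real_of_int b - 1 \<ge> \<alpha>" and h\<alpha>2: "\<alpha> \<ge> 1" and hD: "D \<ge> 3"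
    and geom: "geometric V E \<C>"
    and local: "\<forall>x\<in>V. \<exists>s m n :: nat. real s = \<alpha> \<and> real m = \<beta> / \<alpha> \<and> real n = qnum b D
                   \<and> is_cext_grid (Gam V E 1 x) E s m n"
    and h\<beta>: "\<beta> > \<alpha> * qnum b D"
  shows "(\<forall>M x i. assembly V E \<C> M \<and> x \<in> V \<and> i \<le> D \<and> setdist E x M = i \<longrightarrow>
            real (card {y \<in> M. gdist E x y = i}) = 1 + \<alpha> * qnum b i)
       \<and> (\<forall>x\<in>V. \<forall>y\<in>V. \<forall>j. 1 \<le> j \<and> j \<le> D \<and> gdist E x y = j \<longrightarrow>
            real (card {M. assembly V E \<C> M \<and> y \<in> M \<and> setdist E x M = j - 1}) = qnum b j)
       \<and> (\<forall>x\<in>V. \<forall>y\<in>V. \<forall>h. h < D \<and> gdist E x y = h \<longrightarrow>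
            (\<exists>s m n :: nat. real s = \<alpha> \<and> real m = \<beta> / \<alpha> - qnum b h \<and> real n = qnum b D - qnum b h
               \<and> is_cext_grid (Gam V E (h + 1) x \<inter> Gam V E 1 y) E s m n))"
proof -
  have "2 \<le> D" using hD by simp
  then obtain al m where al: "real al = \<alpha>" and m: "real m = \<beta> / \<alpha>"
    and "classical_local_grid V E al m (gauss_nat b D) \<C> D (gauss_nat b)"
    using drg_classical_local_grid[OF drg hb h\<alpha>2 _ geom local h\<beta>] by blast
  then interpret classical_local_grid V E al m "gauss_nat b D" \<C> D "gauss_nat b" by simp
  have qnum: "qnum b i = real (gauss_nat b i)" for i using qnum_eq_gauss_nat hb by simp
  have smono: "strict_mono (gauss_nat b)" using hb by (intro strict_mono_gauss_nat) simp
  have q_less: "gauss_nat b h < m" "gauss_nat b h < gauss_nat b D" if "h < D" for h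
    using strict_monoD[OF smono that] r_less_m by simp_all
  show ?thesis
  proof (intro conjI allI impI ballI)
    fix M x i assume "assembly V E \<C> M \<and> x \<in> V \<and> i \<le> D \<and> setdist E x M = i"
    then show "real (card {y \<in> M. gdist E x y = i}) = 1 + \<alpha> * qnum b i"
      using card_assembly_nearest by (simp add: al[symmetric] qnum)
  next
    fix x y j assume "x \<in> V" "y \<in> V" "1 \<le> j \<and> j \<le> D \<and> gdist E x y = j"
    then show "real (card {M. assembly V E \<C> M \<and> y \<in> M \<and> setdist E x M = j - 1}) = qnum b j"
      using card_assemblies_towards by (simp add: qnum)
  next
    fix x y h assume "x \<in> V" "y \<in> V" "h < D \<and> gdist E x y = h"
    then show "\<exists>s m n :: nat. real s = \<alpha> \<and> real m = \<beta> / \<alpha> - qnum b h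
        \<and> real n = qnum b D - qnum b h \<and> is_cext_grid (Gam V E (h + 1) x \<inter> Gam V E 1 y) E s m n"
      using farther_is_cext_grid q_less[of h] al m
      by (intro exI[of _ al] exI[of _ "m - gauss_nat b h"] exI[of _ "gauss_nat b D - gauss_nat b h"])
        (auto simp: qnum of_nat_diff less_imp_le)
  qed
qed

end
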